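(* Let $m\ge2$, $R$ a commutative integral domain, and $G=\mathrm{Sp}_{2m}$ realised as below. Let $0\neq r\in R$ and $v=1+r\alpha_{12}\in U_{12}(R)$. Let $\phi(s)=1+s(e_{1,-1}-e_{-2,2})$ for $s\in R$. Then: (1) $\mathrm{Z}(\mathrm{C}_{G(R)}(v))\le\pm U_{12}(R)\cdot\phi(R)$; (2) if $R^*\neq\{\pm1\}$ then $\mathrm{Z}(\mathrm{C}_{G(R)}(v))=\pm U_{12}(R)$; (3) if $R^*=\{\pm1\}$ and $\mathrm{char}(R)\neq2$ then $\mathrm{Z}(\mathrm{C}_{G(R)}(v))=\pm U_{12}(R)\cdot\phi(R)$.
   Context: $\mathrm{Sp}_{2m}$ is the group of $2m\times2m$ matrices preserving the standard alternating form with Gram matrix $\begin{pmatrix}0&I_m\\-I_m&0\end{pmatrix}$; rows and columns are indexed by $1,\ldots,m,-1,\ldots,-m$ (index $-i$ standing for $m+i$). $e_{ij}$ is the matrix unit with $1$ in position $(i,j)$. For $1\le|i|<|j|\le m$, $\alpha_{ij}=e_{ij}+\varepsilon e_{-j,-i}$ with $\varepsilon=-1$ if $ij>0$ and $\varepsilon=1$ if $ij<0$. The short root subgroup is $U_{12}=\{1+c\,\alpha_{12}\}$ and $U_{12}(R)=\{1+c\,\alpha_{12}:c\in R\}$; $\pm H$ denotes $\{\pm h:h\in H\}$; $\mathrm{Z}(\cdot)$ is the centre and $\mathrm{C}$ the centralizer. *)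

theory Defs
  imports Main
begin

text \<open>Matrices of size 2m x 2m over a commutative ring, with rows and columns indexed by
  the integers 1,...,m,-1,...,-m (index -i standing for m+i).\<close>

definition idx :: "nat \<Rightarrow> int set" where
  "idx m = {i. i \<noteq> 0 \<and> \<bar>i\<bar> \<le> int m}"

definition is_mat :: "nat \<Rightarrow> (int \<Rightarrow> int \<Rightarrow> 'a::zero) \<Rightarrow> bool" where
  "is_mat m A \<longleftrightarrow> (\<forall>i j. i \<notin> idx m \<or> j \<notin> idx m \<longrightarrow> A i j = 0)"

definition mmul :: "nat \<Rightarrow> (int \<Rightarrow> int \<Rightarrow> 'a::comm_ring_1) \<Rightarrow> (int \<Rightarrow> int \<Rightarrow> 'a) \<Rightarrow> (int \<Rightarrow> int \<Rightarrow> 'a)" where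
  "mmul m A B = (\<lambda>i j. if i \<in> idx m \<and> j \<in> idx m then (\<Sum>k\<in>idx m. A i k * B k j) else 0)"

definition mone :: "nat \<Rightarrow> (int \<Rightarrow> int \<Rightarrow> 'a::comm_ring_1)" where
  "mone m = (\<lambda>i j. if i \<in> idx m \<and> i = j then 1 else 0)"

definition mtrans :: "(int \<Rightarrow> int \<Rightarrow> 'a) \<Rightarrow> (int \<Rightarrow> int \<Rightarrow> 'a)" where
  "mtrans A = (\<lambda>i j. A j i)"

definition madd :: "(int \<Rightarrow> int \<Rightarrow> 'a::comm_ring_1) \<Rightarrow> (int \<Rightarrow> int \<Rightarrow> 'a) \<Rightarrow> (int \<Rightarrow> int \<Rightarrow> 'a)" where
  "madd A B = (\<lambda>i j. A i j + B i j)"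

definition msmult :: "'a::comm_ring_1 \<Rightarrow> (int \<Rightarrow> int \<Rightarrow> 'a) \<Rightarrow> (int \<Rightarrow> int \<Rightarrow> 'a)" where
  "msmult c A = (\<lambda>i j. c * A i j)"

definition mneg :: "(int \<Rightarrow> int \<Rightarrow> 'a::comm_ring_1) \<Rightarrow> (int \<Rightarrow> int \<Rightarrow> 'a)" where
  "mneg A = (\<lambda>i j. - A i j)"

definition eunit :: "int \<Rightarrow> int \<Rightarrow> (int \<Rightarrow> int \<Rightarrow> 'a::comm_ring_1)" where
  "eunit i j = (\<lambda>a b. if a = i \<and> b = j then 1 else 0)"

text \<open>Gram matrix ((0, I_m), (-I_m, 0)).\<close>
definition gram :: "nat \<Rightarrow> (int \<Rightarrow> int \<Rightarrow> 'a::comm_ring_1)" where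
  "gram m = (\<lambda>i j. if i \<in> idx m \<and> j = - i then (if i > 0 then 1 else -1) else 0)"

definition Sp :: "nat \<Rightarrow> (int \<Rightarrow> int \<Rightarrow> 'a::comm_ring_1) set" where
  "Sp m = {g. is_mat m g \<and> mmul m (mmul m (mtrans g) (gram m)) g = gram m}"

definition alpha :: "int \<Rightarrow> int \<Rightarrow> (int \<Rightarrow> int \<Rightarrow> 'a::comm_ring_1)" where
  "alpha i j = madd (eunit i j) (msmult (if i * j > 0 then -1 else 1) (eunit (-j) (-i)))"

definition U12 :: "nat \<Rightarrow> (int \<Rightarrow> int \<Rightarrow> 'a::comm_ring_1) set" where
  "U12 m = {madd (mone m) (msmult c (alpha 1 2)) | c. True}"

definition phi :: "nat \<Rightarrow> 'a::comm_ring_1 \<Rightarrow> (int \<Rightarrow> int \<Rightarrow> 'a)" where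
  "phi m s = madd (mone m) (msmult s (madd (eunit 1 (-1)) (mneg (eunit (-2) 2))))"

definition pm :: "(int \<Rightarrow> int \<Rightarrow> 'a::comm_ring_1) set \<Rightarrow> (int \<Rightarrow> int \<Rightarrow> 'a) set" where
  "pm H = H \<union> mneg ` H"

definition setmul :: "nat \<Rightarrow> (int \<Rightarrow> int \<Rightarrow> 'a::comm_ring_1) set \<Rightarrow> (int \<Rightarrow> int \<Rightarrow> 'a) set \<Rightarrow> (int \<Rightarrow> int \<Rightarrow> 'a) set" where
  "setmul m A B = {mmul m x y | x y. x \<in> A \<and> y \<in> B}"

definition centralizer :: "nat \<Rightarrow> (int \<Rightarrow> int \<Rightarrow> 'a::comm_ring_1) set \<Rightarrow> (int \<Rightarrow> int \<Rightarrow> 'a) \<Rightarrow> (int \<Rightarrow> int \<Rightarrow> 'a) set" where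
  "centralizer m G v = {g \<in> G. mmul m g v = mmul m v g}"

definition centre :: "nat \<Rightarrow> (int \<Rightarrow> int \<Rightarrow> 'a::comm_ring_1) set \<Rightarrow> (int \<Rightarrow> int \<Rightarrow> 'a) set" where
  "centre m H = {z \<in> H. \<forall>h \<in> H. mmul m z h = mmul m h z}"

end

theory Submission
  imports Defs
begin

text \<open>Write \<open>N = \<alpha>\<^sub>1\<^sub>2\<close> and \<open>M = e\<^sub>1\<^sub>,\<^sub>-\<^sub>1 - e\<^sub>-\<^sub>2\<^sub>,\<^sub>2\<close>, so that
  \<open>\<phi>(s) = 1 + s M\<close>. Since \<open>r \<noteq> 0\<close>, the centralizer of \<open>v = 1 + r N\<close> in \<open>Sp\<^sub>2\<^sub>m(R)\<close> is the
  centralizer \<open>C\<close> of \<open>N\<close>. A central element \<open>z\<close> of \<open>C\<close> commutes with the elements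
  \<open>1 + e\<^sub>1\<^sub>,\<^sub>-\<^sub>1\<close>, \<open>1 + e\<^sub>-\<^sub>2\<^sub>,\<^sub>2\<close>, \<open>1 + \<alpha>\<^sub>1\<^sub>k\<close>, \<open>1 + \<alpha>\<^sub>k\<^sub>2\<close> (\<open>|k| \<ge> 3\<close>) and a Weyl element of
  \<open>C\<close>; comparing matrix entries gives \<open>z = a + p N + x M\<close>, and \<open>z\<close> being symplectic gives
  \<open>a\<^sup>2 = 1\<close>. Conversely \<open>a + p N + x M\<close> with \<open>a\<^sup>2 = 1\<close> is central in \<open>C\<close> when \<open>x = 0\<close>, or when
  all of \<open>C\<close> commutes with \<open>M\<close>. A unit \<open>u \<noteq> \<plusminus>1\<close> gives the torus element
  \<open>diag(u, u, u\<^sup>-\<^sup>1, u\<^sup>-\<^sup>1)\<close> of \<open>C\<close>, which only commutes with \<open>z\<close> if \<open>x = 0\<close>. If instead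
  \<open>R\<^sup>* = {\<plusminus>1}\<close> and \<open>2 \<noteq> 0\<close>, the symplectic relations among the entries of \<open>h \<in> C\<close> in the
  rows and columns \<open>\<plusminus>1, \<plusminus>2\<close> force \<open>h M = M h\<close>.\<close>

section \<open>Matrix arithmetic\<close>

lemma finite_idx [simp]: "finite (idx m)"
  by (rule finite_subset[of _ "{- int m..int m}"]) (auto simp: idx_def)

lemma idx_uminus_iff [simp]: "- k \<in> idx m \<longleftrightarrow> k \<in> idx m"
  by (simp add: idx_def)

lemma small_idx: "2 \<le> m \<Longrightarrow> 1 \<in> idx m \<and> -1 \<in> idx m \<and> 2 \<in> idx m \<and> -2 \<in> idx m"
  by (auto simp: idx_def)

lemma is_mat_mmul [simp]: "is_mat m (mmul m A B)"
  by (simp add: is_mat_def mmul_def)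

lemma is_mat_mone [simp]: "is_mat m (mone m)"
  by (simp add: is_mat_def mone_def)

lemma is_mat_gram [simp]: "is_mat m (gram m)"
  by (auto simp add: is_mat_def gram_def idx_def)

lemma is_mat_eunit: "a \<in> idx m \<Longrightarrow> b \<in> idx m \<Longrightarrow> is_mat m (eunit a b)"
  by (auto simp add: is_mat_def eunit_def)

lemma is_mat_madd: "is_mat m A \<Longrightarrow> is_mat m B \<Longrightarrow> is_mat m (madd A B)"
  by (simp add: is_mat_def madd_def)

lemma is_mat_msmult: "is_mat m A \<Longrightarrow> is_mat m (msmult c A)"
  by (simp add: is_mat_def msmult_def)

lemma mmul_madd_right: "mmul m A (madd B C) = madd (mmul m A B) (mmul m A C)"
  by (simp add: fun_eq_iff mmul_def madd_def distrib_left sum.distrib)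

lemma mmul_madd_left: "mmul m (madd A B) C = madd (mmul m A C) (mmul m B C)"
  by (simp add: fun_eq_iff mmul_def madd_def distrib_right sum.distrib)

lemma mmul_msmult_right: "mmul m A (msmult c B) = msmult c (mmul m A B)"
  by (simp add: fun_eq_iff mmul_def msmult_def sum_distrib_left mult.left_commute)

lemma mmul_msmult_left: "mmul m (msmult c A) B = msmult c (mmul m A B)"
  by (simp add: fun_eq_iff mmul_def msmult_def sum_distrib_left mult.assoc)

lemma mmul_eunit_right:
  "a \<in> idx m \<Longrightarrow> mmul m A (eunit a b) = (\<lambda>i j. if i \<in> idx m \<and> j \<in> idx m \<and> j = b then A i a else 0)"
  by (simp add: fun_eq_iff mmul_def eunit_def if_distrib[of "\<lambda>x. _ * x"] sum.delta' cong: if_cong)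

lemma mmul_eunit_left:
  "b \<in> idx m \<Longrightarrow> mmul m (eunit a b) A = (\<lambda>i j. if i \<in> idx m \<and> j \<in> idx m \<and> i = a then A b j else 0)"
  by (simp add: fun_eq_iff mmul_def eunit_def if_distrib[of "\<lambda>x. x * _"] sum.delta cong: if_cong)

lemma mmul_mone_right: "is_mat m A \<Longrightarrow> mmul m A (mone m) = A"
  by (rule ext, rule ext)
    (auto simp: mmul_def mone_def is_mat_def if_distrib[of "\<lambda>x. _ * x"] sum.delta' cong: if_cong)

lemma mmul_mone_left: "is_mat m A \<Longrightarrow> mmul m (mone m) A = A"
  by (rule ext, rule ext)
    (auto simp: mmul_def mone_def is_mat_def if_distrib[of "\<lambda>x. x * _"] sum.delta cong: if_cong)

lemma eunit_mmul_eunit: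
  "a \<in> idx m \<Longrightarrow> b \<in> idx m \<Longrightarrow> c \<in> idx m \<Longrightarrow> d \<in> idx m \<Longrightarrow>
   mmul m (eunit a b) (eunit c d) = msmult (if b = c then 1 else 0) (eunit a d)"
  by (subst mmul_eunit_right) (auto simp: fun_eq_iff msmult_def eunit_def)

lemma gram_mmul_eunit:
  "a \<in> idx m \<Longrightarrow> b \<in> idx m \<Longrightarrow>
   mmul m (gram m) (eunit a b) = msmult (if a < 0 then 1 else -1) (eunit (-a) b)"
  by (subst mmul_eunit_right) (auto simp: fun_eq_iff msmult_def eunit_def gram_def idx_def)

lemma eunit_mmul_gram:
  "a \<in> idx m \<Longrightarrow> b \<in> idx m \<Longrightarrow>
   mmul m (eunit a b) (gram m) = msmult (if b > 0 then 1 else -1) (eunit a (-b))"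
  by (subst mmul_eunit_left) (auto simp: fun_eq_iff msmult_def eunit_def gram_def idx_def)

lemma mtrans_madd: "mtrans (madd A B) = madd (mtrans A) (mtrans B)"
  by (simp add: mtrans_def madd_def)

lemma mtrans_msmult: "mtrans (msmult c A) = msmult c (mtrans A)"
  by (simp add: mtrans_def msmult_def)

lemma mtrans_eunit: "mtrans (eunit a b) = eunit b a"
  by (auto simp add: fun_eq_iff mtrans_def eunit_def)

lemma mtrans_mone: "mtrans (mone m) = mone m"
  by (auto simp add: fun_eq_iff mtrans_def mone_def)

text \<open>Normalises a product of linear combinations of matrix units to a linear combination of
  matrix units; the remaining identity is then checked entrywise.\<close>
lemmas mat_simps = mmul_madd_right mmul_madd_left mmul_msmult_right mmul_msmult_left
  mtrans_madd mtrans_msmult mtrans_eunit mtrans_mone eunit_mmul_eunit gram_mmul_eunit eunit_mmul_gram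
  mmul_mone_right mmul_mone_left is_mat_madd is_mat_msmult is_mat_eunit

lemmas mmul_eunit_simps = mmul_madd_right mmul_madd_left mmul_msmult_right mmul_msmult_left
  mmul_eunit_right mmul_eunit_left

section \<open>Elements of the centralizer of \<open>\<alpha>\<^sub>1\<^sub>2\<close>\<close>

lemma commute_mone_plus_iff:
  assumes "is_mat m z" "is_mat m P"
  shows "mmul m z (madd (mone m) P) = mmul m (madd (mone m) P) z \<longleftrightarrow> mmul m z P = mmul m P z"
  using assms by (simp add: mmul_madd_right mmul_madd_left mmul_mone_right mmul_mone_left)
    (simp add: fun_eq_iff madd_def)

lemma centralizer_mone_plus_smult:
  fixes r :: "'a::idom"
  assumes "r \<noteq> 0" and "\<forall>g\<in>G. is_mat m g" and "is_mat m A"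
  shows "centralizer m G (madd (mone m) (msmult r A)) = centralizer m G A"
proof -
  have "mmul m g (msmult r A) = mmul m (msmult r A) g \<longleftrightarrow> mmul m g A = mmul m A g" for g
    using \<open>r \<noteq> 0\<close> by (simp add: mmul_msmult_right mmul_msmult_left) (simp add: fun_eq_iff msmult_def)
  then show ?thesis
    using assms(2,3) by (auto simp: centralizer_def commute_mone_plus_iff is_mat_msmult)
qed

lemma centre_commutes_offset:
  assumes "z \<in> centre m H" "madd (mone m) P \<in> H" "is_mat m z" "is_mat m P"
  shows "mmul m z P = mmul m P z"
  using assms commute_mone_plus_iff[OF assms(3,4)] by (simp add: centre_def)

lemma mone_plus_in_centralizer_Sp:
  assumes "is_mat m P" "is_mat m A"
    and "mmul m (mmul m (mtrans (madd (mone m) P)) (gram m)) (madd (mone m) P) = gram m"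
    and "mmul m P A = mmul m A P"
  shows "madd (mone m) P \<in> centralizer m (Sp m) A"
  using assms commute_mone_plus_iff[of m "madd (mone m) P" A]
  by (simp add: centralizer_def Sp_def is_mat_madd mmul_madd_right mmul_madd_left
      mmul_mone_right mmul_mone_left)

lemma alpha_1_2: "alpha 1 2 = madd (eunit 1 2) (msmult (-1) (eunit (-2) (-1)))"
  by (simp add: alpha_def)

lemma is_mat_alpha: "i \<in> idx m \<Longrightarrow> j \<in> idx m \<Longrightarrow> is_mat m (alpha i j)"
  by (simp add: alpha_def is_mat_madd is_mat_msmult is_mat_eunit)

lemma is_mat_alpha_1_2: "2 \<le> m \<Longrightarrow> is_mat m (alpha 1 2)"
  using small_idx by (simp add: is_mat_alpha)

lemma centralizer_Sp_U12:
  fixes r :: "'a::idom"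
  assumes "2 \<le> m" "r \<noteq> 0"
  shows "centralizer m (Sp m) (madd (mone m) (msmult r (alpha 1 2))) = centralizer m (Sp m) (alpha 1 2)"
  using assms by (simp add: centralizer_mone_plus_smult Sp_def is_mat_alpha_1_2)

lemma eunit_1_m1_in_centralizer:
  assumes "2 \<le> m"
  shows "madd (mone m) (eunit 1 (-1)) \<in> centralizer m (Sp m) (alpha 1 2 :: int \<Rightarrow> int \<Rightarrow> 'a::comm_ring_1)"
  using small_idx[OF assms] is_mat_alpha_1_2[OF assms]
  by (intro mone_plus_in_centralizer_Sp; simp add: alpha_1_2 mat_simps;
      auto simp: fun_eq_iff madd_def msmult_def eunit_def)

lemma eunit_m2_2_in_centralizer:
  assumes "2 \<le> m"
  shows "madd (mone m) (eunit (-2) 2) \<in> centralizer m (Sp m) (alpha 1 2 :: int \<Rightarrow> int \<Rightarrow> 'a::comm_ring_1)"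
  using small_idx[OF assms] is_mat_alpha_1_2[OF assms]
  by (intro mone_plus_in_centralizer_Sp; simp add: alpha_1_2 mat_simps;
      auto simp: fun_eq_iff madd_def msmult_def eunit_def)

definition outer_idx :: "nat \<Rightarrow> int set" where
  "outer_idx m = idx m - {1, -1, 2, -2}"

lemma outer_idx_uminus_iff [simp]: "- k \<in> outer_idx m \<longleftrightarrow> k \<in> outer_idx m"
  by (auto simp: outer_idx_def)

lemma alpha_1_k_in_centralizer:
  assumes "2 \<le> m" "k \<in> outer_idx m"
  shows "madd (mone m) (alpha 1 k) \<in> centralizer m (Sp m) (alpha 1 2 :: int \<Rightarrow> int \<Rightarrow> 'a::comm_ring_1)"
  using small_idx[OF assms(1)] is_mat_alpha_1_2[OF assms(1)] assms(2)
  by (cases "0 < k"; intro mone_plus_in_centralizer_Sp; simp add: outer_idx_def alpha_def mat_simps;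
      auto simp: fun_eq_iff madd_def msmult_def eunit_def idx_def)

lemma alpha_k_2_in_centralizer:
  assumes "2 \<le> m" "k \<in> outer_idx m"
  shows "madd (mone m) (alpha k 2) \<in> centralizer m (Sp m) (alpha 1 2 :: int \<Rightarrow> int \<Rightarrow> 'a::comm_ring_1)"
  using small_idx[OF assms(1)] is_mat_alpha_1_2[OF assms(1)] assms(2)
  by (cases "0 < k"; intro mone_plus_in_centralizer_Sp; simp add: outer_idx_def alpha_def mat_simps;
      auto simp: fun_eq_iff madd_def msmult_def eunit_def idx_def)

text \<open>The Weyl element sending \<open>e\<^sub>1 \<mapsto> e\<^sub>-\<^sub>2 \<mapsto> e\<^sub>1\<close> and
  \<open>e\<^sub>2 \<mapsto> -e\<^sub>-\<^sub>1 \<mapsto> e\<^sub>2\<close>, fixing the other basis vectors.\<close>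
definition weyl :: "nat \<Rightarrow> int \<Rightarrow> int \<Rightarrow> 'a::comm_ring_1" where
  "weyl m = madd (mone m)
     (madd (msmult (-1) (madd (eunit 1 1) (madd (eunit 2 2) (madd (eunit (-1) (-1)) (eunit (-2) (-2))))))
       (madd (madd (eunit (-2) 1) (eunit 1 (-2))) (msmult (-1) (madd (eunit (-1) 2) (eunit 2 (-1))))))"

lemma weyl_in_centralizer:
  assumes "2 \<le> m"
  shows "weyl m \<in> centralizer m (Sp m) (alpha 1 2 :: int \<Rightarrow> int \<Rightarrow> 'a::comm_ring_1)"
  unfolding weyl_def using small_idx[OF assms] is_mat_alpha_1_2[OF assms]
  by (intro mone_plus_in_centralizer_Sp; simp add: alpha_1_2 mat_simps;
      auto simp: fun_eq_iff madd_def msmult_def eunit_def)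

definition torus :: "nat \<Rightarrow> 'a \<Rightarrow> 'a \<Rightarrow> int \<Rightarrow> int \<Rightarrow> 'a::comm_ring_1" where
  "torus m u u' = madd (mone m)
     (madd (msmult (u - 1) (madd (eunit 1 1) (eunit 2 2)))
       (msmult (u' - 1) (madd (eunit (-1) (-1)) (eunit (-2) (-2)))))"

lemma torus_in_centralizer:
  assumes "2 \<le> m" "u * u' = 1"
  shows "torus m u u' \<in> centralizer m (Sp m) (alpha 1 2 :: int \<Rightarrow> int \<Rightarrow> 'a::comm_ring_1)"
  unfolding torus_def using small_idx[OF assms(1)] is_mat_alpha_1_2[OF assms(1)]
  by (intro mone_plus_in_centralizer_Sp; simp add: alpha_1_2 mat_simps;
      auto simp: fun_eq_iff madd_def msmult_def eunit_def algebra_simps assms(2) mult.commute[of u' u])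

lemma commute_eunit_entries:
  assumes "mmul m z (eunit a b) = mmul m (eunit a b) z" "a \<in> idx m" "b \<in> idx m" "i \<in> idx m"
  shows "z i a = (if i = a then z b b else 0)" and "z b i = (if i = b then z a a else 0)"
proof -
  have "mmul m z (eunit a b) i j = mmul m (eunit a b) z i j" for i j
    using assms(1) by simp
  from this[of i b] this[of a i]
  show "z i a = (if i = a then z b b else 0)" "z b i = (if i = b then z a a else 0)"
    using assms(2-) by (auto simp: mmul_eunit_right mmul_eunit_left)
qed

lemma commute_alpha_1_k_entries:
  assumes "mmul m z (alpha 1 k) = mmul m (alpha 1 k) z" "2 \<le> m" "k \<in> outer_idx m" "j \<in> idx m"
  shows "z k j = (if j = k then z 1 1 else if j = -1 then (if k > 0 then -1 else 1) * z 1 (-k) else 0)"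
    and "j \<noteq> 1 \<Longrightarrow> j \<noteq> -k \<Longrightarrow> z j (-k) = 0"
proof -
  have e: "mmul m z (alpha 1 k) i j = mmul m (alpha 1 k) z i j" for i j
    using assms(1) by simp
  have k: "k \<in> idx m" "k \<noteq> 0" "k \<noteq> 1" "k \<noteq> -1" "k \<noteq> 2" "k \<noteq> -2"
    using assms(3) by (auto simp: outer_idx_def idx_def)
  note ids = small_idx[OF assms(2)] k assms(4)
  show "z k j = (if j = k then z 1 1 else if j = -1 then (if k > 0 then -1 else 1) * z 1 (-k) else 0)"
    using e[of 1 j] ids
    by (cases "k > 0"; simp add: alpha_def mmul_eunit_simps; auto simp: madd_def msmult_def)
  show "z j (-k) = 0" if "j \<noteq> 1" "j \<noteq> -k"
    using e[of j "-1"] ids that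
    by (cases "k > 0"; simp add: alpha_def mmul_eunit_simps; auto simp: madd_def msmult_def)
qed

lemma commute_alpha_k_2_entries:
  assumes "mmul m z (alpha k 2) = mmul m (alpha k 2) z" "2 \<le> m" "k \<in> outer_idx m"
    "i \<in> idx m" "i \<noteq> k" "i \<noteq> -2"
  shows "z i k = 0"
proof -
  have "mmul m z (alpha k 2) i 2 = mmul m (alpha k 2) z i 2"
    using assms(1) by simp
  moreover have "k \<in> idx m" "k \<noteq> 0" "k \<noteq> 2" "k \<noteq> -2"
    using assms(3) by (auto simp: outer_idx_def idx_def)
  ultimately show ?thesis
    using small_idx[OF assms(2)] assms(4-)
    by (cases "k > 0"; simp add: alpha_def mmul_eunit_simps; auto simp: madd_def msmult_def)
qed

section \<open>The centre of the centralizer\<close>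

definition phi_gen :: "int \<Rightarrow> int \<Rightarrow> 'a::comm_ring_1" where
  "phi_gen = madd (eunit 1 (-1)) (msmult (-1) (eunit (-2) 2))"

definition zmat :: "nat \<Rightarrow> 'a \<Rightarrow> 'a \<Rightarrow> 'a \<Rightarrow> int \<Rightarrow> int \<Rightarrow> 'a::comm_ring_1" where
  "zmat m a p x = madd (msmult a (mone m)) (madd (msmult p (alpha 1 2)) (msmult x phi_gen))"

lemma zmat_entry:
  "zmat m a p x i j = (if i \<in> idx m \<and> i = j then a else 0)
     + (if i = 1 \<and> j = 2 then p else 0) - (if i = -2 \<and> j = -1 then p else 0)
     + (if i = 1 \<and> j = -1 then x else 0) - (if i = -2 \<and> j = 2 then x else 0)"
  by (auto simp: zmat_def alpha_1_2 phi_gen_def madd_def msmult_def mone_def eunit_def)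

lemma is_mat_zmat: "2 \<le> m \<Longrightarrow> is_mat m (zmat m a p x)"
  using small_idx by (auto simp: is_mat_def zmat_entry)

lemma zmat_mmul_zmat:
  assumes "2 \<le> m"
  shows "mmul m (zmat m a p x) (zmat m b q y)
           = (zmat m (a * b) (a * q + p * b) (a * y + x * b) :: int \<Rightarrow> int \<Rightarrow> 'a::comm_ring_1)"
  using small_idx[OF assms]
  by (simp add: zmat_def alpha_1_2 phi_gen_def mat_simps;
      auto simp: fun_eq_iff madd_def msmult_def eunit_def mone_def algebra_simps)

lemma zmat_symplectic:
  assumes "2 \<le> m"
  shows "mmul m (mmul m (mtrans (zmat m a p x)) (gram m)) (zmat m a p x)
           = msmult (a * a) (gram m :: int \<Rightarrow> int \<Rightarrow> 'a::comm_ring_1)"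
  using small_idx[OF assms]
  by (simp add: zmat_def alpha_1_2 phi_gen_def mat_simps;
      auto simp: fun_eq_iff madd_def msmult_def eunit_def gram_def algebra_simps)

lemma zmat_commutes_alpha_1_2:
  assumes "2 \<le> m"
  shows "mmul m (zmat m a p x) (alpha 1 2)
           = mmul m (alpha 1 2) (zmat m a p x :: int \<Rightarrow> int \<Rightarrow> 'a::comm_ring_1)"
  using small_idx[OF assms]
  by (simp add: zmat_def alpha_1_2 phi_gen_def mat_simps;
      auto simp: fun_eq_iff madd_def msmult_def eunit_def mone_def)

lemma commute_alpha_1_2_entries:
  assumes "mmul m h (alpha 1 2) = mmul m (alpha 1 2) h" "2 \<le> m"
  shows "h 2 2 = h 1 1" "h (-1) 2 = - h (-2) 1" "h 2 (-1) = - h 1 (-2)" "h (-2) (-2) = h (-1) (-1)"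
    and "i \<in> idx m \<Longrightarrow> i \<noteq> 1 \<Longrightarrow> i \<noteq> -2 \<Longrightarrow> h i 1 = 0"
    and "i \<in> idx m \<Longrightarrow> i \<noteq> 1 \<Longrightarrow> i \<noteq> -2 \<Longrightarrow> h i (-2) = 0"
    and "j \<in> idx m \<Longrightarrow> j \<noteq> 2 \<Longrightarrow> j \<noteq> -1 \<Longrightarrow> h 2 j = 0"
    and "j \<in> idx m \<Longrightarrow> j \<noteq> 2 \<Longrightarrow> j \<noteq> -1 \<Longrightarrow> h (-1) j = 0"
proof -
  have e: "mmul m h (alpha 1 2) i j = mmul m (alpha 1 2) h i j" for i j
    using assms(1) by simp
  note ids = small_idx[OF assms(2)]
  show "h 2 2 = h 1 1" "h (-1) 2 = - h (-2) 1" "h 2 (-1) = - h 1 (-2)" "h (-2) (-2) = h (-1) (-1)"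
    using e[of 1 2] e[of "-2" 2] e[of 1 "-1"] e[of "-2" "-1"] ids
    by (simp_all add: alpha_1_2 mmul_eunit_simps; simp add: madd_def msmult_def)+
  show "h i 1 = 0" "h i (-2) = 0" if "i \<in> idx m" "i \<noteq> 1" "i \<noteq> -2"
    using e[of i 2] e[of i "-1"] ids that
    by (simp_all add: alpha_1_2 mmul_eunit_simps; simp add: madd_def msmult_def)+
  show "h 2 j = 0" "h (-1) j = 0" if "j \<in> idx m" "j \<noteq> 2" "j \<noteq> -1"
    using e[of 1 j] e[of "-2" j] ids that
    by (simp_all add: alpha_1_2 mmul_eunit_simps; simp add: madd_def msmult_def)+
qed

lemma zmat_in_Sp_iff:
  assumes "2 \<le> m"
  shows "zmat m a p x \<in> Sp m \<longleftrightarrow> a * a = (1 :: 'a::comm_ring_1)"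
proof
  assume "zmat m a p x \<in> Sp m"
  then have "msmult (a * a) (gram m) 1 (-1) = (gram m 1 (-1) :: 'a)"
    using zmat_symplectic[OF assms, of a p x] by (simp add: Sp_def)
  then show "a * a = 1"
    using small_idx[OF assms] by (simp add: msmult_def gram_def)
next
  assume "a * a = 1"
  then show "zmat m a p x \<in> Sp m"
    using zmat_symplectic[OF assms, of a p x] is_mat_zmat[OF assms] by (simp add: Sp_def msmult_def)
qed

lemma is_mat_centre_centralizer_Sp: "z \<in> centre m (centralizer m (Sp m) A) \<Longrightarrow> is_mat m z"
  by (simp add: centre_def centralizer_def Sp_def)

lemma centre_centralizer_alpha_1_2_outer_entries:
  assumes m2: "2 \<le> m"
    and zZ: "z \<in> centre m (centralizer m (Sp m) (alpha 1 2 :: int \<Rightarrow> int \<Rightarrow> 'a::comm_ring_1))"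
    and k: "k \<in> outer_idx m" and i: "i \<in> idx m"
  shows "z i k = (if i = k then z 1 1 else 0)" and "z k i = (if i = k then z 1 1 else 0)"
proof -
  note ids = small_idx[OF m2]
  have zm: "is_mat m z"
    using zZ by (rule is_mat_centre_centralizer_Sp)
  have "is_mat m (alpha 1 l)" "is_mat m (alpha l 2)" if "l \<in> outer_idx m" for l
    using is_mat_alpha ids that by (auto simp: outer_idx_def)
  then have "mmul m z (alpha 1 l) = mmul m (alpha 1 l) z" "mmul m z (alpha l 2) = mmul m (alpha l 2) z"
    if "l \<in> outer_idx m" for l
    using centre_commutes_offset[OF zZ alpha_1_k_in_centralizer[OF m2 that] zm]
      centre_commutes_offset[OF zZ alpha_k_2_in_centralizer[OF m2 that] zm] that by blast+
  note row = commute_alpha_1_k_entries[OF this(1) m2] and col = commute_alpha_k_2_entries[OF this(2) m2]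
  have k': "k \<in> idx m" "k \<noteq> 1" "k \<noteq> -1" "k \<noteq> 2" "k \<noteq> -2"
    using k by (auto simp: outer_idx_def)
  show "z i k = (if i = k then z 1 1 else 0)"
    using row(1)[of k k] row(2)[of "-k" i] col[of k i] k k' i by (cases "i = -2") auto
  have "z 1 (-k) = 0"
    using col[of "-k" 1] k k' ids by auto
  then show "z k i = (if i = k then z 1 1 else 0)"
    using row(1)[of k i] k i by auto
qed

lemma centre_centralizer_alpha_1_2_inner_entries:
  assumes m2: "2 \<le> m"
    and zZ: "z \<in> centre m (centralizer m (Sp m) (alpha 1 2 :: int \<Rightarrow> int \<Rightarrow> 'a::comm_ring_1))"
    and "i \<in> {1, -1, 2, -2}" "j \<in> {1, -1, 2, -2}"
  shows "z i j = zmat m (z 1 1) (z 1 2) (z 1 (-1)) i j"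
proof -
  note ids = small_idx[OF m2]
  have zm: "is_mat m z"
    using zZ by (rule is_mat_centre_centralizer_Sp)
  have "mmul m z (alpha 1 2) = mmul m (alpha 1 2) z"
    using zZ by (simp add: centre_def centralizer_def)
  note rel = commute_alpha_1_2_entries[OF this m2]
  note E1 = commute_eunit_entries[OF centre_commutes_offset[OF zZ eunit_1_m1_in_centralizer[OF m2] zm]]
  note E2 = commute_eunit_entries[OF centre_commutes_offset[OF zZ eunit_m2_2_in_centralizer[OF m2] zm]]
  have "z (-1) 1 = 0" "z 2 1 = 0" "z (-2) 1 = 0" "z (-1) (-1) = z 1 1" "z (-1) 2 = 0"
    using E1(1)[of "-1"] E1(1)[of 2] E1(1)[of "-2"] E1(2)[of "-1"] E1(2)[of 2] ids
    by (auto simp: is_mat_eunit)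
  moreover have "z 1 (-2) = 0" "z (-1) (-2) = 0" "z 2 (-2) = 0" "z (-2) (-2) = z 2 2" "z 2 (-1) = 0"
    using E2(1)[of 1] E2(1)[of "-1"] E2(1)[of 2] E2(1)[of "-2"] E2(2)[of "-1"] ids
    by (auto simp: is_mat_eunit)
  moreover have "z (-2) 2 = - z 1 (-1)" "z (-2) (-1) = - z 1 2"
  proof -
    have "mmul m z (weyl m) = mmul m (weyl m) z"
      using zZ weyl_in_centralizer[OF m2] by (auto simp: centre_def)
    then have W: "mmul m z (weyl m) 1 j = mmul m (weyl m) z 1 j" for j
      by simp
    show "z (-2) 2 = - z 1 (-1)" "z (-2) (-1) = - z 1 2"
      using W[of 2] W[of "-1"] ids zm
      by (simp_all add: weyl_def mmul_eunit_simps mmul_mone_right mmul_mone_left;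
          simp add: madd_def msmult_def algebra_simps)+
  qed
  ultimately show ?thesis
    using assms(3,4) rel(1) ids
    by (cases "i = 1"; cases "i = -1"; cases "i = 2"; cases "j = 1"; cases "j = -1"; cases "j = 2";
        simp add: zmat_entry)
qed

lemma centre_centralizer_alpha_1_2_eq_zmat:
  assumes m2: "2 \<le> m"
    and zZ: "z \<in> centre m (centralizer m (Sp m) (alpha 1 2 :: int \<Rightarrow> int \<Rightarrow> 'a::comm_ring_1))"
  shows "z = zmat m (z 1 1) (z 1 2) (z 1 (-1))"
proof (intro ext)
  fix i j
  consider "i \<notin> idx m \<or> j \<notin> idx m" | "j \<in> outer_idx m" "i \<in> idx m" | "i \<in> outer_idx m" "j \<in> idx m"
    | "i \<in> {1, -1, 2, -2}" "j \<in> {1, -1, 2, -2}"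
    by (auto simp: outer_idx_def)
  then show "z i j = zmat m (z 1 1) (z 1 2) (z 1 (-1)) i j"
  proof cases
    case 1
    moreover from 1 have "z i j = 0"
      using is_mat_centre_centralizer_Sp[OF zZ] by (auto simp: is_mat_def)
    ultimately show ?thesis
      using small_idx[OF m2] by (auto simp: zmat_entry)
  next
    case 2
    then show ?thesis
      using centre_centralizer_alpha_1_2_outer_entries(1)[OF m2 zZ]
      by (auto simp: zmat_entry outer_idx_def)
  next
    case 3
    then show ?thesis
      using centre_centralizer_alpha_1_2_outer_entries(2)[OF m2 zZ]
      by (auto simp: zmat_entry outer_idx_def)
  qed (rule centre_centralizer_alpha_1_2_inner_entries[OF m2 zZ])
qed

lemma centre_centralizer_alpha_1_2_subset:
  assumes "2 \<le> m"
  shows "centre m (centralizer m (Sp m) (alpha 1 2))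
           \<subseteq> {zmat m a p x | a p x. a = 1 \<or> a = (-1 :: 'a::idom)}"
proof
  fix z assume zZ: "z \<in> centre m (centralizer m (Sp m) (alpha 1 2 :: int \<Rightarrow> int \<Rightarrow> 'a))"
  then have "z \<in> Sp m"
    by (simp add: centre_def centralizer_def)
  then have "z 1 1 * z 1 1 = 1"
    using centre_centralizer_alpha_1_2_eq_zmat[OF assms zZ] zmat_in_Sp_iff[OF assms] by metis
  then show "z \<in> {zmat m a p x | a p x. a = 1 \<or> a = -1}"
    using centre_centralizer_alpha_1_2_eq_zmat[OF assms zZ] by (auto simp: square_eq_1_iff)
qed

section \<open>When the centralizer commutes with \<open>\<phi>\<close>\<close>

lemma symplectic_form_entry:
  assumes "i \<in> idx m" "j \<in> idx m"
  shows "mmul m (mmul m (mtrans h) (gram m)) h i j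
           = (\<Sum>l\<in>idx m. (if l < 0 then 1 else -1) * h (-l) i * h l j)"
proof -
  have "(\<Sum>k\<in>idx m. mtrans h i k * gram m k l) = (if l < 0 then 1 else -1) * h (-l) i"
    if "l \<in> idx m" for l
  proof -
    have "(\<Sum>k\<in>idx m. mtrans h i k * gram m k l)
        = (\<Sum>k\<in>idx m. if k = -l then (if l < 0 then 1 else -1) * h (-l) i else 0)"
      by (rule sum.cong) (auto simp: mtrans_def gram_def)
    then show ?thesis using that by (simp add: sum.delta')
  qed
  then show ?thesis
    using assms by (simp add: mmul_def cong: sum.cong)
qed

lemma centralizer_alpha_1_2_symplectic_relations:
  assumes "2 \<le> m" "h \<in> centralizer m (Sp m) (alpha 1 2 :: int \<Rightarrow> int \<Rightarrow> 'a::comm_ring_1)"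
  shows "h 1 1 * h (-1) (-1) + h 1 (-2) * h (-2) 1 = 1"
    and "2 * (h 1 1 * h (-2) 1) = 0"
    and "2 * (h 1 (-2) * h (-1) (-1)) = 0"
proof -
  have sp: "mmul m (mmul m (mtrans h) (gram m)) h = gram m"
    and comm: "mmul m h (alpha 1 2) = mmul m (alpha 1 2) h"
    using assms(2) by (auto simp: centralizer_def Sp_def)
  note ids = small_idx[OF assms(1)]
  note rel = commute_alpha_1_2_entries[OF comm assms(1)]
  have form: "gram m i j = h 1 i * h (-1) j - h (-2) i * h 2 j"
    if "i \<in> {1, -2}" "i \<in> idx m" "j \<in> idx m" for i j
  proof -
    have "h (-k) i = 0" if "k \<in> idx m - {-1, 2}" for k
      using rel(5)[of "-k"] rel(6)[of "-k"] that \<open>i \<in> {1, -2}\<close> by auto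
    then have "(\<Sum>l\<in>idx m. (if l < 0 then 1 else -1) * h (-l) i * h l j)
        = (\<Sum>l\<in>{-1, 2}. (if l < 0 then 1 else -1) * h (-l) i * h l j)"
      using ids by (intro sum.mono_neutral_right) auto
    then show ?thesis
      using symplectic_form_entry[OF that(2,3), of h] sp by simp
  qed
  show "h 1 1 * h (-1) (-1) + h 1 (-2) * h (-2) 1 = 1"
    using form[of 1 "-1"] ids rel(3) by (simp add: gram_def algebra_simps)
  show "2 * (h 1 1 * h (-2) 1) = 0"
    using form[of 1 2] ids rel(1,2) by (simp add: gram_def algebra_simps)
  show "2 * (h 1 (-2) * h (-1) (-1)) = 0"
    using form[of "-2" "-1"] ids rel(3,4) by (simp add: gram_def algebra_simps)
qed

lemma det_one_eqs_if_units_pm1: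
  fixes a b c d :: "'a::idom"
  assumes units: "\<forall>u::'a. u dvd 1 \<longrightarrow> u = 1 \<or> u = -1"
    and "a * d + b * c = 1" "a * c = 0" "b * d = 0"
  shows "a = d \<and> b = c"
proof -
  have inverse_eq: "y = x" if "x * y = 1" for x y :: 'a
  proof -
    have "x = 1 \<or> x = -1" using units that by (metis dvdI)
    then show ?thesis using that by (auto simp: minus_equation_iff[of y])
  qed
  show ?thesis
  proof (cases "c = 0")
    case True
    then have "a * d = 1" using assms(2) by simp
    then show ?thesis using True assms(4) inverse_eq by force
  next
    case False
    then have "a = 0" using assms(3) by simp
    then have "b * c = 1" using assms(2) by simp
    then show ?thesis using \<open>a = 0\<close> assms(4) inverse_eq by force
  qed
qed

lemma centralizer_alpha_1_2_commutes_phi_gen: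
  fixes h :: "int \<Rightarrow> int \<Rightarrow> 'a::idom"
  assumes m2: "2 \<le> m" and hC: "h \<in> centralizer m (Sp m) (alpha 1 2)"
    and units: "\<forall>u::'a. u dvd 1 \<longrightarrow> u = 1 \<or> u = -1" and two: "(2::'a) \<noteq> 0"
  shows "mmul m h phi_gen = mmul m phi_gen h"
proof -
  have "mmul m h (alpha 1 2) = mmul m (alpha 1 2) h"
    using hC by (simp add: centralizer_def)
  note rel = commute_alpha_1_2_entries[OF this m2]
  note sp = centralizer_alpha_1_2_symplectic_relations[OF m2 hC]
  have "h 1 1 = h (-1) (-1) \<and> h 1 (-2) = h (-2) 1"
    using det_one_eqs_if_units_pm1[OF units sp(1)] sp(2,3) two by simp
  then have eqs: "h (-1) (-1) = h 1 1" "h (-2) 1 = h 1 (-2)" by simp_all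
  note ids = small_idx[OF m2]
  have L: "mmul m h phi_gen i j = (if i \<in> idx m \<and> j \<in> idx m \<and> j = -1 then h i 1 else 0)
      - (if i \<in> idx m \<and> j \<in> idx m \<and> j = 2 then h i (-2) else 0)" for i j
    using ids by (simp add: phi_gen_def mmul_eunit_simps; simp add: madd_def msmult_def)
  have R: "mmul m phi_gen h i j = (if i \<in> idx m \<and> j \<in> idx m \<and> i = 1 then h (-1) j else 0)
      - (if i \<in> idx m \<and> j \<in> idx m \<and> i = -2 then h 2 j else 0)" for i j
    using ids by (simp add: phi_gen_def mmul_eunit_simps; simp add: madd_def msmult_def)
  have "mmul m h phi_gen i j = mmul m phi_gen h i j" for i j
  proof (cases "i \<in> idx m \<and> j \<in> idx m")
    case True
    then show ?thesis
      unfolding L R using eqs rel(1-4) rel(5-8)[of i] rel(5-8)[of j]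
      by (cases "i = 1"; cases "i = -2"; cases "j = -1"; cases "j = 2") auto
  qed (auto simp: L R)
  then show ?thesis by blast
qed

lemma zmat_in_centre:
  fixes a p x :: "'a::comm_ring_1"
  assumes m2: "2 \<le> m" and "a * a = 1"
    and x: "x = 0 \<or> (\<forall>h \<in> centralizer m (Sp m) (alpha 1 2 :: int \<Rightarrow> int \<Rightarrow> 'a).
                          mmul m h phi_gen = mmul m phi_gen h)"
  shows "zmat m a p x \<in> centre m (centralizer m (Sp m) (alpha 1 2))"
proof -
  have "zmat m a p x \<in> Sp m"
    using zmat_in_Sp_iff[OF m2] \<open>a * a = 1\<close> by blast
  then have zC: "zmat m a p x \<in> centralizer m (Sp m) (alpha 1 2)"
    using zmat_commutes_alpha_1_2[OF m2] by (simp add: centralizer_def)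
  have "mmul m (zmat m a p x) h = mmul m h (zmat m a p x)"
    if hC: "h \<in> centralizer m (Sp m) (alpha 1 2)" for h
  proof -
    have hm: "is_mat m h" and h_alpha: "mmul m h (alpha 1 2) = mmul m (alpha 1 2) h"
      using hC by (auto simp: centralizer_def Sp_def)
    have "x = 0 \<or> mmul m h phi_gen = mmul m phi_gen h"
      using x hC by blast
    then have "msmult x (mmul m phi_gen h) = msmult x (mmul m h phi_gen)"
      by (auto simp: msmult_def)
    then show ?thesis
      using hm h_alpha by (simp add: zmat_def mmul_madd_left mmul_madd_right mmul_msmult_left
          mmul_msmult_right mmul_mone_left mmul_mone_right)
  qed
  with zC show ?thesis by (simp add: centre_def)
qed

lemma zmat_in_centre_imp_eq_0:
  fixes u a p x :: "'a::idom"
  assumes m2: "2 \<le> m" and zZ: "zmat m a p x \<in> centre m (centralizer m (Sp m) (alpha 1 2))"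
    and u: "u dvd 1" "u \<noteq> 1" "u \<noteq> -1"
  shows "x = 0"
proof -
  obtain u' where uu': "u * u' = 1" using \<open>u dvd 1\<close> by (metis dvdE)
  have "mmul m (zmat m a p x) (torus m u u') = mmul m (torus m u u') (zmat m a p x)"
    using zZ torus_in_centralizer[OF m2 uu'] by (auto simp: centre_def)
  then have "mmul m (zmat m a p x) (torus m u u') 1 (-1) = mmul m (torus m u u') (zmat m a p x) 1 (-1)"
    by simp
  then have "u' * x = u * x"
    using small_idx[OF m2]
    by (simp add: torus_def mmul_eunit_simps mmul_mone_left mmul_mone_right is_mat_zmat[OF m2];
        simp add: madd_def msmult_def zmat_entry algebra_simps)
  moreover have "u' \<noteq> u"
    using uu' u(2,3) by (auto simp: square_eq_1_iff)
  ultimately show "x = 0" by simp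
qed

section \<open>The groups \<open>\<plusminus>U\<^sub>1\<^sub>2(R)\<close> and \<open>\<plusminus>U\<^sub>1\<^sub>2(R) \<phi>(R)\<close>\<close>

lemma U12_eq_zmat: "U12 m = range (\<lambda>c. zmat m 1 c 0)"
proof -
  have "madd (mone m) (msmult c (alpha 1 2)) = zmat m 1 c 0" for c :: 'a
    by (simp add: zmat_def fun_eq_iff madd_def msmult_def)
  then show ?thesis by (auto simp: U12_def)
qed

lemma phi_eq_zmat: "phi m s = zmat m 1 0 s"
  by (auto simp: fun_eq_iff zmat_entry phi_def mneg_def madd_def msmult_def mone_def eunit_def)

lemma mneg_zmat: "mneg (zmat m a p x) = zmat m (-a) (-p) (-x)"
  by (simp add: fun_eq_iff zmat_def mneg_def madd_def msmult_def)

lemma pm_U12_eq_zmat: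
  assumes "2 \<le> m"
  shows "pm (U12 m) = {zmat m a c 0 | a c. a = 1 \<or> a = (-1 :: 'a::comm_ring_1)}"
proof -
  have "mneg ` range (\<lambda>c. zmat m 1 c 0) = range (\<lambda>c. zmat m (-1) c (0::'a))"
    by (auto simp: mneg_zmat image_iff) (metis minus_minus)
  then show ?thesis
    unfolding pm_def U12_eq_zmat by auto
qed

lemma setmul_pm_U12_phi_eq_zmat:
  assumes m2: "2 \<le> m"
  shows "setmul m (pm (U12 m)) (range (phi m))
           = {zmat m a c s | a c s. a = 1 \<or> a = (-1 :: 'a::comm_ring_1)}"
  unfolding setmul_def pm_U12_eq_zmat[OF m2]
proof (intro equalityI subsetI)
  have prod: "mmul m (zmat m a c 0) (phi m s) = zmat m a c (a * s)" for a c s :: 'a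
    by (simp add: phi_eq_zmat zmat_mmul_zmat[OF m2])
  fix z :: "int \<Rightarrow> int \<Rightarrow> 'a"
  {
    assume "z \<in> {mmul m x y |x y. x \<in> {zmat m a c 0 |a c. a = 1 \<or> a = -1} \<and> y \<in> range (phi m)}"
    then obtain a c s where a: "a = 1 \<or> a = -1" and "z = mmul m (zmat m a c 0) (phi m s)"
      by blast
    then have "z = zmat m a c (a * s)"
      by (simp only: prod)
    with a show "z \<in> {zmat m a c s | a c s. a = 1 \<or> a = -1}" by blast
  next
    assume "z \<in> {zmat m a c s | a c s. a = 1 \<or> a = -1}"
    then obtain a c s where a: "a = 1 \<or> a = -1" and "z = zmat m a c s" by blast
    then have "z = mmul m (zmat m a c 0) (phi m (a * s))"
      by (auto simp: prod)
    with a show "z \<in> {mmul m x y |x y. x \<in> {zmat m a c 0 |a c. a = 1 \<or> a = -1} \<and> y \<in> range (phi m)}"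
      by blast
  }
qed

lemma centre_centralizer_alpha_1_2_eq_pm_U12:
  fixes u :: "'a::idom"
  assumes m2: "2 \<le> m" and "u dvd 1" "u \<noteq> 1" "u \<noteq> -1"
  shows "centre m (centralizer m (Sp m) (alpha 1 2 :: int \<Rightarrow> int \<Rightarrow> 'a)) = pm (U12 m)"
proof
  show "centre m (centralizer m (Sp m) (alpha 1 2 :: int \<Rightarrow> int \<Rightarrow> 'a)) \<subseteq> pm (U12 m)"
  proof
    fix z assume zZ: "z \<in> centre m (centralizer m (Sp m) (alpha 1 2 :: int \<Rightarrow> int \<Rightarrow> 'a))"
    then obtain a p x where a: "a = 1 \<or> a = -1" and z: "z = zmat m a p x"
      using centre_centralizer_alpha_1_2_subset[OF m2] by blast
    then have "x = 0"
      using zZ assms zmat_in_centre_imp_eq_0 by blast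
    with a show "z \<in> pm (U12 m)"
      unfolding z pm_U12_eq_zmat[OF m2] by blast
  qed
  show "pm (U12 m) \<subseteq> centre m (centralizer m (Sp m) (alpha 1 2 :: int \<Rightarrow> int \<Rightarrow> 'a))"
    by (auto simp: pm_U12_eq_zmat[OF m2] intro!: zmat_in_centre[OF m2])
qed

lemma centre_centralizer_alpha_1_2_eq_setmul:
  assumes m2: "2 \<le> m"
    and units: "\<forall>u::'a::idom. u dvd 1 \<longrightarrow> u = 1 \<or> u = -1" and two: "(2::'a) \<noteq> 0"
  shows "centre m (centralizer m (Sp m) (alpha 1 2 :: int \<Rightarrow> int \<Rightarrow> 'a))
           = setmul m (pm (U12 m)) (range (phi m))"
proof
  show "centre m (centralizer m (Sp m) (alpha 1 2 :: int \<Rightarrow> int \<Rightarrow> 'a))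
          \<subseteq> setmul m (pm (U12 m)) (range (phi m))"
    using centre_centralizer_alpha_1_2_subset[OF m2] by (simp add: setmul_pm_U12_phi_eq_zmat[OF m2])
  have "\<forall>h \<in> centralizer m (Sp m) (alpha 1 2). mmul m h phi_gen = mmul m phi_gen (h :: int \<Rightarrow> int \<Rightarrow> 'a)"
    using centralizer_alpha_1_2_commutes_phi_gen[OF m2 _ units two] by blast
  then show "setmul m (pm (U12 m)) (range (phi m))
               \<subseteq> centre m (centralizer m (Sp m) (alpha 1 2 :: int \<Rightarrow> int \<Rightarrow> 'a))"
    by (auto simp: setmul_pm_U12_phi_eq_zmat[OF m2] intro!: zmat_in_centre[OF m2])
qed

theorem proposition8p3:
  fixes m :: nat and r :: "'a::idom"
  assumes "m \<ge> 2" and "r \<noteq> 0"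
  shows "centre m (centralizer m (Sp m) (madd (mone m) (msmult r (alpha 1 2))))
           \<subseteq> setmul m (pm (U12 m)) (range (phi m))
       \<and> ((\<exists>u::'a. u dvd 1 \<and> u \<noteq> 1 \<and> u \<noteq> -1) \<longrightarrow>
           centre m (centralizer m (Sp m) (madd (mone m) (msmult r (alpha 1 2)))) = pm (U12 m))
       \<and> ((\<forall>u::'a. u dvd 1 \<longrightarrow> u = 1 \<or> u = -1) \<and> (2::'a) \<noteq> 0 \<longrightarrow>
           centre m (centralizer m (Sp m) (madd (mone m) (msmult r (alpha 1 2))))
             = setmul m (pm (U12 m)) (range (phi m)))"
  unfolding centralizer_Sp_U12[OF assms]
proof (intro conjI impI)
  show "centre m (centralizer m (Sp m) (alpha 1 2 :: int \<Rightarrow> int \<Rightarrow> 'a))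
          \<subseteq> setmul m (pm (U12 m)) (range (phi m))"
    using centre_centralizer_alpha_1_2_subset[OF \<open>m \<ge> 2\<close>]
    by (simp add: setmul_pm_U12_phi_eq_zmat[OF \<open>m \<ge> 2\<close>])
  show "centre m (centralizer m (Sp m) (alpha 1 2 :: int \<Rightarrow> int \<Rightarrow> 'a)) = pm (U12 m)"
    if "\<exists>u::'a. u dvd 1 \<and> u \<noteq> 1 \<and> u \<noteq> -1"
    using that centre_centralizer_alpha_1_2_eq_pm_U12[OF \<open>m \<ge> 2\<close>] by blast
  show "centre m (centralizer m (Sp m) (alpha 1 2 :: int \<Rightarrow> int \<Rightarrow> 'a))
          = setmul m (pm (U12 m)) (range (phi m))"
    if "(\<forall>u::'a. u dvd 1 \<longrightarrow> u = 1 \<or> u = -1) \<and> (2::'a) \<noteq> 0"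
    using that centre_centralizer_alpha_1_2_eq_setmul[OF \<open>m \<ge> 2\<close>] by blast
qed

end
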